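(* Let $p$ be a prime and $G_0$ a finite centerless $p$-perfect group with $p$ dividing $|G_0|$. Let $\phi:\tilde G_p\to G_0$ be the universal $p$-Frattini cover of $G_0$, let $\ker_0=\ker(\phi)$ and let $\ker_1$ be the Frattini subgroup of $\ker_0$ (the closed subgroup generated by $p$-th powers and commutators of elements of $\ker_0$). Put $G_1=\tilde G_p/\ker_1$ and let $\phi_{1,0}:G_1\to G_0$ be the natural map. Let $P_0$ be a $p$-Sylow subgroup of $G_0$ and $G_0'=N_{G_0}(P_0)$ its normalizer. Then the extension $\phi_{1,0}^{-1}(G_0')\to G_0'$ (restriction of $\phi_{1,0}$) is not split.
   Context: A finite group is $p$-perfect if it has no $\mathbb{Z}/p$ quotient. The universal $p$-Frattini cover $\phi:\tilde G_p\to G_0$ is the (unique up to isomorphism) profinite cover of $G_0$ which is minimal among covers by $p$-projective profinite groups; its kernel is a pro-free pro-$p$ group contained in the Frattini subgroup of $\tilde G_p$, and it is versal for Frattini covers of $G_0$ with $p$-group kernel. In particular $G_1\to G_0$ is the universal Frattini cover of $G_0$ with elementary abelian $p$-group kernel. *)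

theory Defs
  imports "HOL-Algebra.Algebra" "HOL-Computational_Algebra.Primes"
begin

definition group_center :: "('a, 'm) monoid_scheme \<Rightarrow> 'a set" where
  "group_center G = {z \<in> carrier G. \<forall>g \<in> carrier G. z \<otimes>\<^bsub>G\<^esub> g = g \<otimes>\<^bsub>G\<^esub> z}"

definition centerless :: "('a, 'm) monoid_scheme \<Rightarrow> bool" where
  "centerless G \<longleftrightarrow> group_center G = {\<one>\<^bsub>G\<^esub>}"

definition p_perfect :: "nat \<Rightarrow> ('a, 'm) monoid_scheme \<Rightarrow> bool" where
  "p_perfect p G \<longleftrightarrow> epi G (integer_mod_group p) = {}"

definition maximal_subgroup :: "'a set \<Rightarrow> ('a, 'm) monoid_scheme \<Rightarrow> bool" where
  "maximal_subgroup M G \<longleftrightarrow> subgroup M G \<and> M \<noteq> carrier G \<and>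
     (\<forall>K. subgroup K G \<and> M \<subseteq> K \<longrightarrow> K = M \<or> K = carrier G)"

definition frattini_subgroup :: "('a, 'm) monoid_scheme \<Rightarrow> 'a set" where
  "frattini_subgroup G = carrier G \<inter> \<Inter> {M. maximal_subgroup M G}"

definition frattini_cover ::
  "('a, 'm) monoid_scheme \<Rightarrow> ('b, 'n) monoid_scheme \<Rightarrow> ('a \<Rightarrow> 'b) \<Rightarrow> bool" where
  "frattini_cover H G f \<longleftrightarrow> group H \<and> group G \<and> f \<in> epi H G \<and>
     kernel H G f \<subseteq> frattini_subgroup H"

definition elementary_abelian_p :: "nat \<Rightarrow> ('a, 'm) monoid_scheme \<Rightarrow> 'a set \<Rightarrow> bool" where
  "elementary_abelian_p p H K \<longleftrightarrow>
     (\<forall>x \<in> K. \<forall>y \<in> K. x \<otimes>\<^bsub>H\<^esub> y = y \<otimes>\<^bsub>H\<^esub> x) \<and>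
     (\<forall>x \<in> K. x [^]\<^bsub>H\<^esub> p = \<one>\<^bsub>H\<^esub>)"

definition elab_p_frattini_cover ::
  "nat \<Rightarrow> ('a, 'm) monoid_scheme \<Rightarrow> ('b, 'n) monoid_scheme \<Rightarrow> ('a \<Rightarrow> 'b) \<Rightarrow> bool" where
  "elab_p_frattini_cover p H G f \<longleftrightarrow>
     frattini_cover H G f \<and> elementary_abelian_p p H (kernel H G f)"

text \<open>The universal Frattini cover of G with elementary abelian p-kernel
  (i.e. G_1 -> G_0 = tilde G_p / ker_1 -> G_0): an elementary abelian p-Frattini cover
  through which every finite elementary abelian p-Frattini cover of G factors.
  Test covers are taken with carriers in nat, which loses no generality since every
  finite group is isomorphic to one with carrier a subset of nat.\<close>
definition universal_elab_p_frattini_cover ::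
  "nat \<Rightarrow> ('a, 'm) monoid_scheme \<Rightarrow> ('b, 'n) monoid_scheme \<Rightarrow> ('a \<Rightarrow> 'b) \<Rightarrow> bool" where
  "universal_elab_p_frattini_cover p H G f \<longleftrightarrow>
     elab_p_frattini_cover p H G f \<and>
     (\<forall>(H' :: nat monoid) f'. finite (carrier H') \<and> elab_p_frattini_cover p H' G f' \<longrightarrow>
        (\<exists>h \<in> hom H H'. \<forall>x \<in> carrier H. f' (h x) = f x))"

definition sylow_subgroup :: "nat \<Rightarrow> ('a, 'm) monoid_scheme \<Rightarrow> 'a set \<Rightarrow> bool" where
  "sylow_subgroup p G P \<longleftrightarrow> subgroup P G \<and> card P = p ^ multiplicity p (order G)"

end

theory Submission
  imports Defs
begin

text \<open>
  Pick \<open>g \<in> P\<^sub>0\<close> of order \<open>p\<close> and let \<open>C = \<langle>g\<rangle>\<close>. Inducing the faithful character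
  \<open>C \<cong> \<int>/p\<close> up to \<open>G\<^sub>0\<close> gives a monomial embedding \<open>G\<^sub>0 \<rightarrow> (\<int>/p)\<^bsup>C\<backslash>G\<^sub>0\<^esup> \<rtimes> G\<^sub>0\<close>; pulling back
  \<open>(\<int>/p\<^sup>2)\<^bsup>C\<backslash>G\<^sub>0\<^esup> \<rtimes> G\<^sub>0\<close> along it yields an extension of \<open>G\<^sub>0\<close> with elementary abelian
  kernel in which every lift of \<open>g\<close> has a unit coordinate at the coset \<open>C\<close>, which \<open>g\<close> fixes, so
  its \<open>p\<close>-th power is not trivial. Shrinking to a minimal supplement of the kernel makes this a
  Frattini cover, through which the universal cover \<open>G\<^sub>1\<close> factors; hence no lift of \<open>g\<close> to \<open>G\<^sub>1\<close>
  has order \<open>p\<close>, while a section over \<open>N\<^bsub>G\<^sub>0\<^esub>(P\<^sub>0) \<ni> g\<close> would provide one.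
\<close>

text \<open>Needed because the universal property only quantifies over covers with carrier in \<open>nat\<close>.\<close>

lemma (in group) exists_iso_nat_monoid:
  assumes "finite (carrier G)"
  shows "\<exists>(H :: nat monoid) h. group H \<and> h \<in> iso G H"
proof -
  obtain r :: "'a \<Rightarrow> nat" where r: "bij_betw r (carrier G) {0..<card (carrier G)}"
    using ex_bij_betw_finite_nat[OF assms] ..
  define e where "e = inv_into (carrier G) r"
  define H :: "nat monoid" where
    "H = \<lparr>carrier = {0..<card (carrier G)}, monoid.mult = (\<lambda>i j. r (e i \<otimes> e j)), one = r \<one>\<rparr>"
  have e_r: "e (r x) = x" if "x \<in> carrier G" for x
    using r that unfolding e_def by (simp add: bij_betw_inv_into_left)
  have "r \<in> hom G H"
    using bij_betw_apply[OF r] unfolding hom_def H_def by (simp add: e_r)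
  then have iso: "r \<in> iso G H"
    using r unfolding iso_def H_def by simp
  moreover have "group H"
    using iso_imp_img_group[OF iso] by (simp add: H_def)
  ultimately show ?thesis by blast
qed

lemma (in group) subgroup_of_prime_power_order_has_element_of_order_prime:
  assumes p: "Factorial_Ring.prime p" and P: "subgroup P G"
    and card_P: "card P = p ^ k" and "k > 0"
  shows "\<exists>g \<in> P. ord g = p"
proof -
  have "P \<noteq> {\<one>}"
    using one_less_power[OF prime_gt_1_nat[OF p] \<open>k > 0\<close>] card_P by auto
  then obtain x where x: "x \<in> P" "x \<noteq> \<one>"
    using subgroup.one_closed[OF P] by blast
  have x_carrier: "x \<in> carrier G"
    using x P subgroup.subset by blast
  have "x [^] card P = \<one>"
    using group.pow_order_eq_1[OF subgroup_imp_group[OF P], of x] x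
    by (simp add: order_def flip: nat_pow_consistent)
  then obtain j where "j \<le> k" and ord_x: "ord x = p ^ j"
    using pow_eq_id[OF x_carrier] divides_primepow_nat[OF p] card_P by auto
  have "j > 0"
    using ord_x ord_eq_1[OF x_carrier] x(2) by (cases j) auto
  define g where "g = x [^] (p ^ (j - 1))"
  have "ord g = p ^ j div p ^ (j - 1)"
    unfolding g_def using ord_pow[OF x_carrier] ord_x \<open>j > 0\<close> prime_gt_1_nat[OF p]
    by (simp add: le_imp_power_dvd)
  also have "\<dots> = p"
    using \<open>j > 0\<close> prime_gt_1_nat[OF p] by (cases j) auto
  finally have "ord g = p" .
  moreover have "g \<in> P"
    unfolding g_def using subgroup_int_pow_closed[OF P x(1), of "int (p ^ (j - 1))"]
    by (simp only: int_pow_int)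
  ultimately show ?thesis by blast
qed

lemma (in group) sylow_subgroup_has_element_of_order_prime:
  assumes p: "Factorial_Ring.prime p" and "finite (carrier G)"
    and "p dvd order G" and syl: "sylow_subgroup p G P"
  shows "\<exists>g \<in> P. ord g = p"
proof (rule subgroup_of_prime_power_order_has_element_of_order_prime[OF p])
  show "subgroup P G" "card P = p ^ multiplicity p (order G)"
    using syl unfolding sylow_subgroup_def by auto
  have "order G \<noteq> 0"
    using assms(2) by (simp add: order_gt_0_iff_finite[symmetric])
  moreover have "\<not> is_unit p"
    using prime_gt_1_nat[OF p] by simp
  ultimately show "multiplicity p (order G) > 0"
    using multiplicity_gt_zero_iff assms(3) by blast
qed

lemma (in group_hom) kernel_subset_frattini_subgroup:
  assumes no_proper_supplement: "\<And>M. subgroup M G \<Longrightarrow> h ` M = h ` carrier G \<Longrightarrow> M = carrier G"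
  shows "kernel G H h \<subseteq> frattini_subgroup G"
proof
  fix k assume "k \<in> kernel G H h"
  then have k: "k \<in> carrier G" "h k = \<one>\<^bsub>H\<^esub>"
    unfolding kernel_def by auto
  have "k \<in> M" if max: "maximal_subgroup M G" for M
  proof (rule ccontr)
    assume "k \<notin> M"
    have M: "subgroup M G" "M \<noteq> carrier G"
      and M_max: "\<And>K. subgroup K G \<Longrightarrow> M \<subseteq> K \<Longrightarrow> K = M \<or> K = carrier G"
      using max unfolding maximal_subgroup_def by auto
    define K where "K = {x \<in> carrier G. h x \<in> h ` M}"
    have "subgroup K G"
    proof (rule G.subgroupI)
      show "K \<subseteq> carrier G" "K \<noteq> {}"
        unfolding K_def using subgroup.one_closed[OF M(1)] by auto
    next
      fix a b assume "a \<in> K" "b \<in> K"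
      then show "a \<otimes> b \<in> K"
        using subgroup.m_closed[OF subgroup_img_is_subgroup[OF M(1)]] unfolding K_def by auto
    next
      fix a assume "a \<in> K"
      then show "inv a \<in> K"
        using subgroup.m_inv_closed[OF subgroup_img_is_subgroup[OF M(1)]] unfolding K_def by auto
    qed
    moreover have "M \<subseteq> K" "k \<in> K"
      unfolding K_def using subgroup.subset[OF M(1)] subgroup.one_closed[OF M(1)] k by force+
    ultimately have "K = carrier G"
      using M_max \<open>k \<notin> M\<close> by blast
    then have "h ` M = h ` carrier G"
      unfolding K_def using subgroup.subset[OF M(1)] by blast
    then show False
      using no_proper_supplement M by blast
  qed
  then show "k \<in> frattini_subgroup G"
    unfolding frattini_subgroup_def using k by blast
qed

lemma (in group_hom) exists_frattini_supplement:
  assumes "finite (carrier G)"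
  shows "\<exists>S. subgroup S G \<and> h ` S = h ` carrier G \<and>
    kernel (G\<lparr>carrier := S\<rparr>) H h \<subseteq> frattini_subgroup (G\<lparr>carrier := S\<rparr>)"
proof -
  obtain S where S: "subgroup S G" "h ` S = h ` carrier G"
    and S_min: "\<And>T. subgroup T G \<Longrightarrow> h ` T = h ` carrier G \<Longrightarrow> card S \<le> card T"
    using ex_has_least_nat[of "\<lambda>T. subgroup T G \<and> h ` T = h ` carrier G" "carrier G" card]
      G.subgroup_self by blast
  have "h \<in> hom (G\<lparr>carrier := S\<rparr>) H"
    using subgroup.subset[OF S(1)] unfolding hom_def by (auto simp: subset_iff)
  then interpret S: group_hom "G\<lparr>carrier := S\<rparr>" H h
    using G.subgroup_imp_group[OF S(1)] H.group_axioms
    unfolding group_hom_def group_hom_axioms_def by blast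
  have "kernel (G\<lparr>carrier := S\<rparr>) H h \<subseteq> frattini_subgroup (G\<lparr>carrier := S\<rparr>)"
  proof (rule S.kernel_subset_frattini_subgroup)
    fix M assume M: "subgroup M (G\<lparr>carrier := S\<rparr>)" "h ` M = h ` carrier (G\<lparr>carrier := S\<rparr>)"
    have "M \<subseteq> S"
      using subgroup.subset[OF M(1)] by simp
    moreover have "card S \<le> card M"
      using S_min[OF G.incl_subgroup[OF S(1) M(1)]] M(2) S(2) by simp
    moreover have "finite S"
      using assms subgroup.subset[OF S(1)] finite_subset by blast
    ultimately show "M = carrier (G\<lparr>carrier := S\<rparr>)"
      using card_seteq by simp
  qed
  then show ?thesis
    using S by blast
qed

definition elab_p_extension ::
  "nat \<Rightarrow> ('a, 'm) monoid_scheme \<Rightarrow> ('b, 'n) monoid_scheme \<Rightarrow> ('a \<Rightarrow> 'b) \<Rightarrow> bool" where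
  "elab_p_extension p H G f \<longleftrightarrow>
     group H \<and> group G \<and> f \<in> epi H G \<and> elementary_abelian_p p H (kernel H G f)"

lemma elab_p_extension_iso:
  assumes ext: "elab_p_extension p H G f" and "group K" and iso: "i \<in> iso K H"
  shows "elab_p_extension p K G (f \<circ> i)"
proof -
  interpret i: group_hom K H i
    using assms unfolding elab_p_extension_def iso_def group_hom_def group_hom_axioms_def by auto
  have i_inj: "inj_on i (carrier K)" and i_onto: "i ` carrier K = carrier H"
    using iso unfolding iso_def bij_betw_def by auto
  have f: "f \<in> hom H G" "f ` carrier H = carrier G" and "group G"
    and ker: "elementary_abelian_p p H (kernel H G f)"
    using ext unfolding elab_p_extension_def epi_def by auto
  then have "f \<circ> i \<in> epi K G"
    using hom_compose[OF i.homh f(1)] i_onto f(2) image_image[of f i "carrier K"]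
    unfolding epi_def by (simp add: comp_def)
  moreover have "elementary_abelian_p p K (kernel K G (f \<circ> i))"
    unfolding elementary_abelian_p_def
  proof (intro conjI ballI)
    fix x y assume "x \<in> kernel K G (f \<circ> i)" "y \<in> kernel K G (f \<circ> i)"
    then have xy: "x \<in> carrier K" "y \<in> carrier K" "i x \<in> kernel H G f" "i y \<in> kernel H G f"
      unfolding kernel_def by auto
    then have "i (x \<otimes>\<^bsub>K\<^esub> y) = i (y \<otimes>\<^bsub>K\<^esub> x)"
      using ker unfolding elementary_abelian_p_def by simp
    then show "x \<otimes>\<^bsub>K\<^esub> y = y \<otimes>\<^bsub>K\<^esub> x"
      using inj_onD[OF i_inj] xy by simp
  next
    fix x assume "x \<in> kernel K G (f \<circ> i)"
    then have x: "x \<in> carrier K" "i x \<in> kernel H G f"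
      unfolding kernel_def by auto
    then have "i (x [^]\<^bsub>K\<^esub> p) = i \<one>\<^bsub>K\<^esub>"
      using ker unfolding elementary_abelian_p_def by (simp add: i.hom_nat_pow)
    then show "x [^]\<^bsub>K\<^esub> p = \<one>\<^bsub>K\<^esub>"
      using inj_onD[OF i_inj] x by simp
  qed
  ultimately show ?thesis
    using assms \<open>group G\<close> unfolding elab_p_extension_def by blast
qed

lemma elab_p_extension_restrict:
  assumes ext: "elab_p_extension p H G f" and S: "subgroup S H" and "f ` S = carrier G"
  shows "elab_p_extension p (H\<lparr>carrier := S\<rparr>) G f"
proof -
  interpret H: group H
    using ext unfolding elab_p_extension_def by blast
  show ?thesis
    using assms H.subgroup_imp_group[OF S] subgroup.subset[OF S]
    unfolding elab_p_extension_def elementary_abelian_p_def kernel_def epi_def hom_def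
    by (auto simp: subset_iff simp flip: H.nat_pow_consistent)
qed

lemma elab_p_extension_frattini_supplement:
  assumes ext: "elab_p_extension p H G f" and "finite (carrier H)"
  shows "\<exists>S. subgroup S H \<and> elab_p_frattini_cover p (H\<lparr>carrier := S\<rparr>) G f"
proof -
  interpret group_hom H G f
    using ext unfolding elab_p_extension_def epi_def group_hom_def group_hom_axioms_def by auto
  obtain S where S: "subgroup S H" "f ` S = f ` carrier H"
    and frattini: "kernel (H\<lparr>carrier := S\<rparr>) G f \<subseteq> frattini_subgroup (H\<lparr>carrier := S\<rparr>)"
    using exists_frattini_supplement[OF assms(2)] by blast
  have "f ` S = carrier G"
    using S(2) ext unfolding elab_p_extension_def epi_def by simp
  then have "elab_p_extension p (H\<lparr>carrier := S\<rparr>) G f"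
    using elab_p_extension_restrict[OF ext S(1)] by blast
  then show ?thesis
    using S(1) frattini
    unfolding elab_p_frattini_cover_def frattini_cover_def elab_p_extension_def by blast
qed

text \<open>
  The extension \<open>E\<close> consists of pairs \<open>(a, x)\<close> with \<open>x \<in> G\<close> and \<open>a : C\<backslash>G \<rightarrow> \<int>/p\<^sup>2\<close> reducing
  mod \<open>p\<close> to the monomial cocycle \<open>w \<mapsto> dlog (cocycle w x)\<close> of the transversal \<open>rep\<close>;
  elements of \<open>\<int>/p\<^sup>2\<close> are encoded as integers in \<open>[0, p\<^sup>2)\<close>, and \<open>a\<close> vanishes off the cosets.
\<close>

locale monomial_extension = group G for G (structure) +
  fixes p :: nat and g :: 'a
  assumes prime_p: "Factorial_Ring.prime p"
    and g_carrier: "g \<in> carrier G" and ord_g: "ord g = p"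
    and finite_carrier: "finite (carrier G)"
begin

definition C :: "'a set" where
  "C = generate G {g}"

definition cosets :: "'a set set" where
  "cosets = rcosets C"

definition rep :: "'a set \<Rightarrow> 'a" where
  "rep w = (SOME x. x \<in> w)"

definition cocycle :: "'a set \<Rightarrow> 'a \<Rightarrow> 'a" where
  "cocycle w x = rep w \<otimes> x \<otimes> inv (rep (w #> x))"

definition dlog :: "'a \<Rightarrow> int" where
  "dlog c = int (LEAST k. g [^] k = c)"

definition modulus :: int where
  "modulus = int p ^ 2"

lemma p_gt_1: "p > 1"
  using prime_gt_1_nat[OF prime_p] .

lemma modulus_pos: "modulus > 0"
  unfolding modulus_def using p_gt_1 by simp

lemma mod_modulus_mod_p [simp]: "k mod modulus mod int p = k mod int p"
  unfolding modulus_def by (simp add: mod_mod_cancel)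

lemma C_eq: "C = {g [^] k | k. k \<in> (UNIV :: nat set)}"
  unfolding C_def using generate_pow_on_finite_carrier[OF finite_carrier g_carrier] .

lemma subgroup_C: "subgroup C G"
  unfolding C_def using generate_is_subgroup g_carrier by simp

lemma C_subset: "C \<subseteq> carrier G"
  using subgroup.subset[OF subgroup_C] .

lemma g_in_C: "g \<in> C"
  unfolding C_def by (rule generate.incl) simp

lemma pow_dlog: "c \<in> C \<Longrightarrow> g [^] dlog c = c"
  unfolding dlog_def C_eq int_pow_int by (auto intro: LeastI)

lemma dlog_mult:
  assumes "c \<in> C" "d \<in> C"
  shows "dlog (c \<otimes> d) mod int p = (dlog c + dlog d) mod int p"
proof -
  have "g [^] dlog (c \<otimes> d) = g [^] (dlog c + dlog d)"
    using assms subgroup.m_closed[OF subgroup_C] by (simp add: int_pow_mult g_carrier pow_dlog)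
  then have "(dlog c + dlog d) mod int p = dlog (c \<otimes> d) mod int p"
    using int_pow_eq[OF g_carrier] ord_g by (simp add: mod_eq_dvd_iff)
  then show ?thesis
    by simp
qed

lemma dlog_one [simp]: "dlog \<one> = 0"
  unfolding dlog_def by (simp add: Least_eq_0)

lemma dlog_g: "dlog g mod int p = 1"
proof -
  have "g [^] dlog g = g [^] (1 :: int)"
    using pow_dlog[OF g_in_C] g_carrier by simp
  then have "1 mod int p = dlog g mod int p"
    using int_pow_eq[OF g_carrier] ord_g by (simp add: mod_eq_dvd_iff)
  then show ?thesis
    using p_gt_1 by simp
qed

lemma coset_subset: "w \<in> cosets \<Longrightarrow> w \<subseteq> carrier G"
  unfolding cosets_def using C_subset rcosets_part_G[OF subgroup_C] by blast

lemma coset_mult_closed: "w \<in> cosets \<Longrightarrow> x \<in> carrier G \<Longrightarrow> w #> x \<in> cosets"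
  unfolding cosets_def RCOSETS_def using coset_mult_assoc C_subset by auto

lemma cosets_mult_assoc: "w \<in> cosets \<Longrightarrow> x \<in> carrier G \<Longrightarrow> y \<in> carrier G \<Longrightarrow>
    (w #> x) #> y = w #> (x \<otimes> y)"
  using coset_mult_assoc coset_subset by blast

lemma cosets_mult_one [simp]: "w \<in> cosets \<Longrightarrow> w #> \<one> = w"
  using coset_subset by simp

lemma finite_cosets: "finite cosets"
proof -
  have "cosets \<subseteq> Pow (carrier G)"
    using coset_subset by blast
  then show ?thesis
    using finite_carrier finite_subset by blast
qed

lemma C_in_cosets: "C \<in> cosets"
  unfolding cosets_def using rcosetsI[OF C_subset one_closed] C_subset by simp

lemma rep:
  assumes "w \<in> cosets"
  shows "rep w \<in> carrier G" "w = C #> rep w"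
proof -
  obtain a where a: "a \<in> carrier G" "w = C #> a"
    using assms unfolding cosets_def RCOSETS_def by auto
  have "a \<in> w"
    using rcos_self[OF a(1) subgroup_C] a(2) by simp
  then have "rep w \<in> w"
    unfolding rep_def by (rule someI)
  then show "rep w \<in> carrier G"
    using coset_subset[OF assms] by blast
  show "w = C #> rep w"
    using repr_independence[OF _ a(1) subgroup_C] \<open>rep w \<in> w\<close> a(2) by simp
qed

lemma cocycle_in_C:
  assumes w: "w \<in> cosets" and x: "x \<in> carrier G"
  shows "cocycle w x \<in> C"
proof -
  have "C #> (rep w \<otimes> x) = w #> x"
    using coset_mult_assoc[OF C_subset rep(1)[OF w] x] rep(2)[OF w] by simp
  also have "\<dots> = C #> rep (w #> x)"
    using rep(2)[OF coset_mult_closed[OF w x]] .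
  finally have "rep (w #> x) \<in> C #> (rep w \<otimes> x)"
    using rcos_self[OF rep(1)[OF coset_mult_closed[OF w x]] subgroup_C] by simp
  then obtain c where c: "c \<in> C" "rep (w #> x) = c \<otimes> (rep w \<otimes> x)"
    unfolding r_coset_def by auto
  have cancel: "a \<otimes> (inv a \<otimes> z) = z" if "a \<in> carrier G" "z \<in> carrier G" for a z
    using that by (simp add: m_assoc[symmetric])
  have "cocycle w x = inv c"
    using c C_subset rep(1)[OF w] x unfolding cocycle_def
    by (auto simp: inv_mult_group m_assoc cancel)
  then show ?thesis
    using subgroup.m_inv_closed[OF subgroup_C c(1)] by simp
qed

lemma cocycle_mult:
  assumes w: "w \<in> cosets" and x: "x \<in> carrier G" and y: "y \<in> carrier G"
  shows "cocycle w (x \<otimes> y) = cocycle w x \<otimes> cocycle (w #> x) y"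
proof -
  have r: "rep w \<in> carrier G" "rep (w #> x) \<in> carrier G" "rep (w #> (x \<otimes> y)) \<in> carrier G"
    using rep(1) coset_mult_closed w x y by auto
  have cancel: "inv r \<otimes> (r \<otimes> z) = z" if "r \<in> carrier G" "z \<in> carrier G" for r z
    using that by (simp add: m_assoc[symmetric])
  show ?thesis
    using r x y cosets_mult_assoc[OF w x y] unfolding cocycle_def by (simp add: m_assoc cancel)
qed

lemma cocycle_one [simp]: "w \<in> cosets \<Longrightarrow> cocycle w \<one> = \<one>"
  unfolding cocycle_def using rep(1) by simp

lemma cocycle_C_g: "cocycle C g = g"
proof -
  have "rep C \<in> C"
    using rcos_self[OF rep(1)[OF C_in_cosets] subgroup_C] rep(2)[OF C_in_cosets] by simp
  then obtain k :: nat where k: "rep C = g [^] k"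
    unfolding C_eq by blast
  have "C #> g = C"
    using subgroup.rcos_const[OF subgroup_C is_group g_in_C] .
  moreover have "rep C \<otimes> g = g \<otimes> rep C"
    unfolding k using g_carrier nat_pow_Suc2 by simp
  ultimately show ?thesis
    unfolding cocycle_def using rep(1)[OF C_in_cosets] g_carrier by (simp add: m_assoc)
qed


definition Ecarrier :: "(('a set \<Rightarrow> int) \<times> 'a) set" where
  "Ecarrier = {(a, x). x \<in> carrier G \<and> (\<forall>w. w \<notin> cosets \<longrightarrow> a w = 0) \<and>
     (\<forall>w \<in> cosets. a w \<in> {0..<modulus} \<and> a w mod int p = dlog (cocycle w x) mod int p)}"

definition E :: "(('a set \<Rightarrow> int) \<times> 'a) monoid" where
  "E = \<lparr>carrier = Ecarrier,
        monoid.mult = (\<lambda>(a, x) (b, y).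
          (\<lambda>w. if w \<in> cosets then (a w + b (w #> x)) mod modulus else 0, x \<otimes> y)),
        one = (\<lambda>w. 0, \<one>)\<rparr>"

lemma E_carrier: "carrier E = Ecarrier"
  and E_mult: "(a, x) \<otimes>\<^bsub>E\<^esub> (b, y) =
    (\<lambda>w. if w \<in> cosets then (a w + b (w #> x)) mod modulus else 0, x \<otimes> y)"
  and E_one: "\<one>\<^bsub>E\<^esub> = (\<lambda>w. 0, \<one>)"
  unfolding E_def by simp_all

lemma EcarrierI:
  assumes "x \<in> carrier G" "\<And>w. w \<notin> cosets \<Longrightarrow> a w = 0"
    and "\<And>w. w \<in> cosets \<Longrightarrow> 0 \<le> a w \<and> a w < modulus \<and> a w mod int p = dlog (cocycle w x) mod int p"
  shows "(a, x) \<in> Ecarrier"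
  using assms unfolding Ecarrier_def by auto

lemma EcarrierD:
  assumes "(a, x) \<in> Ecarrier"
  shows "x \<in> carrier G" "w \<notin> cosets \<Longrightarrow> a w = 0"
    and "w \<in> cosets \<Longrightarrow> 0 \<le> a w" "w \<in> cosets \<Longrightarrow> a w < modulus"
    and "w \<in> cosets \<Longrightarrow> a w mod int p = dlog (cocycle w x) mod int p"
  using assms unfolding Ecarrier_def by auto

lemma E_mult_closed:
  assumes u: "(a, x) \<in> Ecarrier" and v: "(b, y) \<in> Ecarrier"
  shows "(a, x) \<otimes>\<^bsub>E\<^esub> (b, y) \<in> Ecarrier"
  unfolding E_mult
proof (rule EcarrierI)
  have x: "x \<in> carrier G" and y: "y \<in> carrier G"
    using EcarrierD(1) u v by auto
  then show "x \<otimes> y \<in> carrier G" by simp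
  fix w assume w: "w \<in> cosets"
  have wx: "w #> x \<in> cosets"
    using coset_mult_closed[OF w x] .
  have "(a w + b (w #> x)) mod int p = (a w mod int p + b (w #> x) mod int p) mod int p"
    by (rule mod_add_eq[symmetric])
  also have "\<dots> = (dlog (cocycle w x) mod int p + dlog (cocycle (w #> x) y) mod int p) mod int p"
    using EcarrierD(5)[OF u w] EcarrierD(5)[OF v wx] by simp
  also have "\<dots> = (dlog (cocycle w x) + dlog (cocycle (w #> x) y)) mod int p"
    by (rule mod_add_eq)
  also have "\<dots> = dlog (cocycle w (x \<otimes> y)) mod int p"
    using dlog_mult[OF cocycle_in_C[OF w x] cocycle_in_C[OF wx y]] cocycle_mult[OF w x y] by simp
  finally show "0 \<le> (if w \<in> cosets then (a w + b (w #> x)) mod modulus else 0) \<and>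
      (if w \<in> cosets then (a w + b (w #> x)) mod modulus else 0) < modulus \<and>
      (if w \<in> cosets then (a w + b (w #> x)) mod modulus else 0) mod int p
        = dlog (cocycle w (x \<otimes> y)) mod int p"
    using w modulus_pos by simp
qed simp

lemma E_mult_assoc:
  assumes "(a, x) \<in> Ecarrier" "(b, y) \<in> Ecarrier" "(c, z) \<in> Ecarrier"
  shows "(a, x) \<otimes>\<^bsub>E\<^esub> (b, y) \<otimes>\<^bsub>E\<^esub> (c, z) = (a, x) \<otimes>\<^bsub>E\<^esub> ((b, y) \<otimes>\<^bsub>E\<^esub> (c, z))"
proof -
  have x: "x \<in> carrier G" and y: "y \<in> carrier G" and z: "z \<in> carrier G"
    using EcarrierD(1) assms by auto
  have "((a w + b (w #> x)) mod modulus + c (w #> (x \<otimes> y))) mod modulus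
      = (a w + (b (w #> x) + c ((w #> x) #> y)) mod modulus) mod modulus" if "w \<in> cosets" for w
    using that x y by (simp add: cosets_mult_assoc mod_add_left_eq mod_add_right_eq add.assoc)
  then show ?thesis
    using x y z by (auto simp: E_mult m_assoc coset_mult_closed fun_eq_iff)
qed

lemma E_one_mult:
  assumes u: "(a, x) \<in> Ecarrier"
  shows "\<one>\<^bsub>E\<^esub> \<otimes>\<^bsub>E\<^esub> (a, x) = (a, x)"
proof -
  have "(\<lambda>w. if w \<in> cosets then (0 + a (w #> \<one>)) mod modulus else 0) = a"
    using EcarrierD(2-4)[OF u] by (force simp: fun_eq_iff)
  then show ?thesis
    using EcarrierD(1)[OF u] by (simp add: E_one E_mult)
qed

lemma E_inv:
  assumes u: "(a, x) \<in> Ecarrier"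
  defines "a' \<equiv> \<lambda>w. if w \<in> cosets then (- a (w #> inv x)) mod modulus else 0"
  shows "(a', inv x) \<in> Ecarrier" and "(a', inv x) \<otimes>\<^bsub>E\<^esub> (a, x) = \<one>\<^bsub>E\<^esub>"
proof -
  have x: "x \<in> carrier G"
    using EcarrierD(1)[OF u] .
  show "(a', inv x) \<in> Ecarrier"
  proof (rule EcarrierI)
    fix w assume w: "w \<in> cosets"
    define v where "v = w #> inv x"
    have v: "v \<in> cosets" "v #> x = w"
      unfolding v_def using coset_mult_closed cosets_mult_assoc w x by auto
    have "cocycle v x \<otimes> cocycle w (inv x) = \<one>"
      using cocycle_mult[OF v(1) x inv_closed[OF x]] v x by simp
    then have "int p dvd dlog (cocycle v x) + dlog (cocycle w (inv x))"
      using dlog_mult[OF cocycle_in_C[OF v(1) x] cocycle_in_C[OF w inv_closed[OF x]]]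
      by (simp add: dvd_eq_mod_eq_0)
    moreover have "int p dvd a v - dlog (cocycle v x)"
      using EcarrierD(5)[OF u v(1)] by (simp add: mod_eq_dvd_iff)
    ultimately have "int p dvd - ((a v - dlog (cocycle v x)) + (dlog (cocycle v x) + dlog (cocycle w (inv x))))"
      by (simp only: dvd_minus_iff dvd_add)
    then have "int p dvd - a v - dlog (cocycle w (inv x))"
      by (simp add: algebra_simps)
    then have "(- a v) mod int p = dlog (cocycle w (inv x)) mod int p"
      by (simp add: mod_eq_dvd_iff)
    then show "0 \<le> a' w \<and> a' w < modulus \<and> a' w mod int p = dlog (cocycle w (inv x)) mod int p"
      unfolding a'_def v_def using w modulus_pos by simp
  qed (use x a'_def in auto)
  have "(\<lambda>w. if w \<in> cosets then (a' w + a (w #> inv x)) mod modulus else 0) = (\<lambda>w. 0)"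
  proof
    fix w
    have "((- a (w #> inv x)) mod modulus + a (w #> inv x)) mod modulus = 0"
      using mod_add_left_eq[of "- a (w #> inv x)" modulus "a (w #> inv x)"] by simp
    then show "(if w \<in> cosets then (a' w + a (w #> inv x)) mod modulus else 0) = 0"
      unfolding a'_def by simp
  qed
  then show "(a', inv x) \<otimes>\<^bsub>E\<^esub> (a, x) = \<one>\<^bsub>E\<^esub>"
    using x by (simp add: E_mult E_one)
qed

lemma group_E: "group E"
proof (rule groupI)
  fix u v assume "u \<in> carrier E" "v \<in> carrier E"
  then show "u \<otimes>\<^bsub>E\<^esub> v \<in> carrier E"
    using E_mult_closed by (cases u, cases v) (simp add: E_carrier)
next
  show "\<one>\<^bsub>E\<^esub> \<in> carrier E"
    by (simp add: E_one E_carrier EcarrierI modulus_pos dlog_one)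
next
  fix u v z assume "u \<in> carrier E" "v \<in> carrier E" "z \<in> carrier E"
  then show "u \<otimes>\<^bsub>E\<^esub> v \<otimes>\<^bsub>E\<^esub> z = u \<otimes>\<^bsub>E\<^esub> (v \<otimes>\<^bsub>E\<^esub> z)"
    using E_mult_assoc by (cases u, cases v, cases z) (simp add: E_carrier)
next
  fix u assume "u \<in> carrier E"
  then show "\<one>\<^bsub>E\<^esub> \<otimes>\<^bsub>E\<^esub> u = u"
    using E_one_mult by (cases u) (simp add: E_carrier)
next
  fix u assume "u \<in> carrier E"
  then show "\<exists>v \<in> carrier E. v \<otimes>\<^bsub>E\<^esub> u = \<one>\<^bsub>E\<^esub>"
    using E_inv by (cases u) (force simp: E_carrier)
qed


lemma finite_E: "finite (carrier E)"
proof -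
  let ?extend = "\<lambda>(a, x). (\<lambda>w. if w \<in> cosets then a w else 0, x)"
  have "finite (?extend ` ((cosets \<rightarrow>\<^sub>E {0..<modulus}) \<times> carrier G))"
    using finite_cosets finite_carrier by (intro finite_imageI finite_cartesian_product finite_PiE) auto
  moreover have "carrier E \<subseteq> ?extend ` ((cosets \<rightarrow>\<^sub>E {0..<modulus}) \<times> carrier G)"
  proof
    fix u assume "u \<in> carrier E"
    then obtain a x where u: "u = (a, x)" "(a, x) \<in> Ecarrier"
      unfolding E_carrier by (cases u) auto
    then have "(restrict a cosets, x) \<in> (cosets \<rightarrow>\<^sub>E {0..<modulus}) \<times> carrier G"
      using EcarrierD(1,3,4)[OF u(2)] by auto
    moreover have "u = ?extend (restrict a cosets, x)"
      using EcarrierD(2)[OF u(2)] u(1) by auto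
    ultimately show "u \<in> ?extend ` ((cosets \<rightarrow>\<^sub>E {0..<modulus}) \<times> carrier G)"
      by blast
  qed
  ultimately show ?thesis
    using finite_subset by blast
qed

lemma snd_epi: "snd \<in> epi E G"
proof -
  have "snd \<in> hom E G"
    unfolding hom_def E_carrier using EcarrierD(1) by (auto simp: E_mult)
  moreover have "x \<in> snd ` carrier E" if x: "x \<in> carrier G" for x
  proof -
    have "int p \<le> modulus"
      unfolding modulus_def using p_gt_1 by (simp add: power2_eq_square)
    then have "(\<lambda>w. if w \<in> cosets then dlog (cocycle w x) mod int p else 0, x) \<in> Ecarrier"
      using x p_gt_1 by (intro EcarrierI) (auto intro: less_le_trans[OF pos_mod_bound])
    then show ?thesis
      unfolding E_carrier by force
  qed
  ultimately show ?thesis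
    unfolding epi_def hom_def E_carrier using EcarrierD(1) by auto
qed

lemma group_hom_snd: "group_hom E G snd"
  using group_E snd_epi is_group unfolding group_hom_def group_hom_axioms_def epi_def by blast

lemma E_pow_fst:
  assumes u: "(a, x) \<in> carrier E" and w: "w \<in> cosets" and fixed: "w #> x = w"
  shows "fst ((a, x) [^]\<^bsub>E\<^esub> n) w = int n * a w mod modulus"
proof (induction n)
  case 0
  show ?case by (simp add: E_one)
next
  case (Suc n)
  obtain b y where pow_n: "(a, x) [^]\<^bsub>E\<^esub> n = (b, y)"
    by fastforce
  have "(a, x) [^]\<^bsub>E\<^esub> Suc n = (a, x) \<otimes>\<^bsub>E\<^esub> (b, y)"
    using monoid.nat_pow_Suc2[OF group.is_monoid[OF group_E] u, of n] unfolding pow_n .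
  then have "fst ((a, x) [^]\<^bsub>E\<^esub> Suc n) w = (a w + int n * a w mod modulus) mod modulus"
    using Suc by (simp add: pow_n E_mult w fixed)
  also have "\<dots> = int (Suc n) * a w mod modulus"
    by (simp add: mod_add_right_eq algebra_simps)
  finally show ?case .
qed

lemma kernel_elementary_abelian: "elementary_abelian_p p E (kernel E G snd)"
  unfolding elementary_abelian_p_def
proof (intro conjI ballI)
  fix u v assume "u \<in> kernel E G snd" "v \<in> kernel E G snd"
  then obtain a b where "u = (a, \<one>)" "v = (b, \<one>)"
    unfolding kernel_def by (metis (mono_tags, lifting) mem_Collect_eq prod.collapse)
  then show "u \<otimes>\<^bsub>E\<^esub> v = v \<otimes>\<^bsub>E\<^esub> u"
    by (simp add: E_mult add.commute fun_eq_iff)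
next
  fix u assume "u \<in> kernel E G snd"
  then obtain a where u: "u = (a, \<one>)" "(a, \<one>) \<in> carrier E"
    unfolding kernel_def by (cases u) auto
  have "fst (u [^]\<^bsub>E\<^esub> p) w = 0" for w
  proof (cases "w \<in> cosets")
    case True
    then have "int p dvd a w"
      using EcarrierD(5)[OF u(2)[unfolded E_carrier] True] by (simp add: dvd_eq_mod_eq_0)
    then have "modulus dvd int p * a w"
      unfolding modulus_def power2_eq_square by simp
    then show ?thesis
      using E_pow_fst[OF u(2) True] True u(1) by simp
  next
    case False
    have "u [^]\<^bsub>E\<^esub> p \<in> Ecarrier"
      using monoid.nat_pow_closed[OF group.is_monoid[OF group_E]] u unfolding E_carrier by simp
    then show ?thesis
      using EcarrierD(2) False by (metis prod.collapse)
  qed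
  moreover have "snd (u [^]\<^bsub>E\<^esub> p) = \<one>"
    using group_hom.hom_nat_pow[OF group_hom_snd] u by simp
  ultimately show "u [^]\<^bsub>E\<^esub> p = \<one>\<^bsub>E\<^esub>"
    by (simp add: E_one prod_eq_iff fun_eq_iff)
qed

text \<open>The coordinate of a lift of \<open>g\<close> at the \<open>g\<close>-fixed coset \<open>C\<close> is \<open>\<equiv> 1 (mod p)\<close>.\<close>

lemma lift_of_g_not_order_p:
  assumes u: "(a, g) \<in> carrier E"
  shows "(a, g) [^]\<^bsub>E\<^esub> p \<noteq> \<one>\<^bsub>E\<^esub>"
proof
  assume "(a, g) [^]\<^bsub>E\<^esub> p = \<one>\<^bsub>E\<^esub>"
  then have "int p * a C mod modulus = 0"
    using E_pow_fst[OF u C_in_cosets subgroup.rcos_const[OF subgroup_C is_group g_in_C], of p]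
    by (simp add: E_one)
  then have "modulus dvd int p * a C"
    by (simp add: dvd_eq_mod_eq_0)
  then have "int p dvd a C"
    using p_gt_1 unfolding modulus_def power2_eq_square by simp
  moreover have "a C mod int p = 1"
    using EcarrierD(5)[OF u[unfolded E_carrier] C_in_cosets] cocycle_C_g dlog_g by simp
  ultimately show False
    by (simp add: dvd_eq_mod_eq_0)
qed

end

lemma (in group) exists_elab_p_extension_without_lift_of_order_p:
  assumes "Factorial_Ring.prime p" "finite (carrier G)" "g \<in> carrier G" "ord g = p"
  shows "\<exists>(E :: (('a set \<Rightarrow> int) \<times> 'a) monoid) f. finite (carrier E) \<and>
    elab_p_extension p E G f \<and> (\<forall>y \<in> carrier E. f y = g \<longrightarrow> y [^]\<^bsub>E\<^esub> p \<noteq> \<one>\<^bsub>E\<^esub>)"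
proof -
  interpret monomial_extension G p g
    using assms by unfold_locales
  have "elab_p_extension p E G snd"
    unfolding elab_p_extension_def using group_E is_group snd_epi kernel_elementary_abelian by blast
  moreover have "y [^]\<^bsub>E\<^esub> p \<noteq> \<one>\<^bsub>E\<^esub>" if "y \<in> carrier E" "snd y = g" for y
    using lift_of_g_not_order_p that by (metis prod.collapse)
  ultimately show ?thesis
    using finite_E by blast
qed


lemma (in group) exists_elab_p_frattini_cover_without_lift_of_order_p:
  assumes "Factorial_Ring.prime p" "finite (carrier G)" "g \<in> carrier G" "ord g = p"
  shows "\<exists>(H :: nat monoid) f. finite (carrier H) \<and> elab_p_frattini_cover p H G f \<and>
    (\<forall>y \<in> carrier H. f y = g \<longrightarrow> y [^]\<^bsub>H\<^esub> p \<noteq> \<one>\<^bsub>H\<^esub>)"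
proof -
  obtain E :: "(('a set \<Rightarrow> int) \<times> 'a) monoid" and f where
    fin_E: "finite (carrier E)" and ext: "elab_p_extension p E G f"
    and no_lift: "\<And>y. y \<in> carrier E \<Longrightarrow> f y = g \<Longrightarrow> y [^]\<^bsub>E\<^esub> p \<noteq> \<one>\<^bsub>E\<^esub>"
    using exists_elab_p_extension_without_lift_of_order_p[OF assms] by blast
  interpret E: group E
    using ext unfolding elab_p_extension_def by blast
  obtain K :: "nat monoid" and i where "group K" and iso_EK: "i \<in> iso E K"
    using E.exists_iso_nat_monoid[OF fin_E] by blast
  define j where "j = inv_into (carrier E) i"
  have iso: "j \<in> iso K E"
    unfolding j_def using E.iso_set_sym[OF iso_EK] .
  interpret j: group_hom K E j
    using iso \<open>group K\<close> E.is_group unfolding iso_def group_hom_def group_hom_axioms_def by blast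
  have "bij_betw j (carrier K) (carrier E)"
    using iso unfolding iso_def by blast
  then have fin_K: "finite (carrier K)"
    using bij_betw_finite fin_E by blast
  obtain S where S: "subgroup S K" and cover: "elab_p_frattini_cover p (K\<lparr>carrier := S\<rparr>) G (f \<circ> j)"
    using elab_p_extension_frattini_supplement[OF elab_p_extension_iso[OF ext \<open>group K\<close> iso] fin_K]
    by blast
  have "y [^]\<^bsub>K\<lparr>carrier := S\<rparr>\<^esub> p \<noteq> \<one>\<^bsub>K\<lparr>carrier := S\<rparr>\<^esub>" if "y \<in> S" "(f \<circ> j) y = g" for y
  proof
    assume "y [^]\<^bsub>K\<lparr>carrier := S\<rparr>\<^esub> p = \<one>\<^bsub>K\<lparr>carrier := S\<rparr>\<^esub>"
    then have "y [^]\<^bsub>K\<^esub> p = \<one>\<^bsub>K\<^esub>"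
      using j.G.nat_pow_consistent[of y p S] by simp
    moreover have y: "y \<in> carrier K"
      using that(1) subgroup.subset[OF S] by blast
    ultimately have "j y [^]\<^bsub>E\<^esub> p = \<one>\<^bsub>E\<^esub>"
      using j.hom_nat_pow[OF y, of p] by simp
    then show False
      using no_lift[OF j.hom_closed[OF y]] that(2) by simp
  qed
  moreover have "finite (carrier (K\<lparr>carrier := S\<rparr>))"
    using fin_K subgroup.subset[OF S] finite_subset by auto
  ultimately show ?thesis
    using cover by (intro exI[of _ "K\<lparr>carrier := S\<rparr>"] exI[of _ "f \<circ> j"]) simp
qed

lemma universal_elab_p_frattini_cover_no_lift_of_order_p:
  assumes cover: "universal_elab_p_frattini_cover p G1 G0 \<phi>"
    and p: "Factorial_Ring.prime p" and "group G0" and "finite (carrier G0)"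
    and g: "g \<in> carrier G0" "group.ord G0 g = p"
    and y: "y \<in> carrier G1" "\<phi> y = g"
  shows "y [^]\<^bsub>G1\<^esub> p \<noteq> \<one>\<^bsub>G1\<^esub>"
proof
  assume y_p: "y [^]\<^bsub>G1\<^esub> p = \<one>\<^bsub>G1\<^esub>"
  obtain H :: "nat monoid" and f where "finite (carrier H)" and H: "elab_p_frattini_cover p H G0 f"
    and no_lift: "\<And>z. z \<in> carrier H \<Longrightarrow> f z = g \<Longrightarrow> z [^]\<^bsub>H\<^esub> p \<noteq> \<one>\<^bsub>H\<^esub>"
    using group.exists_elab_p_frattini_cover_without_lift_of_order_p[OF \<open>group G0\<close> p \<open>finite (carrier G0)\<close> g]
    by blast
  then obtain h where h: "h \<in> hom G1 H" and h_lifts: "\<And>x. x \<in> carrier G1 \<Longrightarrow> f (h x) = \<phi> x"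
    using cover unfolding universal_elab_p_frattini_cover_def by blast
  interpret h: group_hom G1 H h
    using h cover H
    unfolding universal_elab_p_frattini_cover_def elab_p_frattini_cover_def frattini_cover_def
      group_hom_def group_hom_axioms_def by blast
  have "h y [^]\<^bsub>H\<^esub> p = \<one>\<^bsub>H\<^esub>"
    using y_p y(1) by (simp flip: h.hom_nat_pow)
  then show False
    using no_lift[of "h y"] h_lifts y by simp
qed

theorem lemma2p7:
  fixes p :: nat
    and G0 :: "('a, 'm) monoid_scheme"
    and G1 :: "('b, 'n) monoid_scheme"
    and phi :: "'b \<Rightarrow> 'a"
    and P0 :: "'a set"
  assumes "Factorial_Ring.prime p"
    and "group G0" and "finite (carrier G0)"
    and "centerless G0" and "p_perfect p G0"
    and "p dvd order G0"
    and "universal_elab_p_frattini_cover p G1 G0 phi"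
    and "sylow_subgroup p G0 P0"
  shows "\<not> (\<exists>s \<in> hom (G0\<lparr>carrier := normalizer G0 P0\<rparr>) G1.
              \<forall>x \<in> normalizer G0 P0. phi (s x) = x)"
proof
  assume "\<exists>s \<in> hom (G0\<lparr>carrier := normalizer G0 P0\<rparr>) G1. \<forall>x \<in> normalizer G0 P0. phi (s x) = x"
  then obtain s where s: "s \<in> hom (G0\<lparr>carrier := normalizer G0 P0\<rparr>) G1"
    and s_section: "\<And>x. x \<in> normalizer G0 P0 \<Longrightarrow> phi (s x) = x" by blast
  interpret G0: group G0 by fact
  have P0: "subgroup P0 G0"
    using assms(8) unfolding sylow_subgroup_def by blast
  obtain g where "g \<in> P0" and ord_g: "G0.ord g = p"
    using G0.sylow_subgroup_has_element_of_order_prime assms(1,3,6,8) by blast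
  then have g: "g \<in> normalizer G0 P0" "g \<in> carrier G0"
    using G0.subgroup_in_normalizer[OF P0] P0 normal_imp_subgroup subgroup.subset by fastforce+
  interpret N: group "G0\<lparr>carrier := normalizer G0 P0\<rparr>"
    using G0.subgroup_imp_group[OF G0.normalizer_imp_subgroup] subgroup.subset[OF P0] by blast
  interpret s: group_hom "G0\<lparr>carrier := normalizer G0 P0\<rparr>" G1 s
    using s assms(7) unfolding universal_elab_p_frattini_cover_def elab_p_frattini_cover_def
      frattini_cover_def group_hom_def group_hom_axioms_def by blast
  have "s g [^]\<^bsub>G1\<^esub> p = \<one>\<^bsub>G1\<^esub>"
    using g G0.pow_ord_eq_1[OF g(2)] ord_g s.hom_one by (simp flip: s.hom_nat_pow G0.nat_pow_consistent)
  then show False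
    using universal_elab_p_frattini_cover_no_lift_of_order_p[OF assms(7,1,2,3) g(2) ord_g]
      s.hom_closed g(1) s_section by simp
qed

end
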